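(* Let $(\mathcal{X},W(y|x),\mathcal{Y})$ be a discrete channel, $P$ a pmf on $\mathcal{X}$, $L\ge1$, and $M\ge L+1$ integers. Let $F\colon[M]\to\mathcal{X}$ have i.i.d. values $F(m)\sim P$, and write $G=G(W)$. Then $$\Pr\{F\text{ is an }(M,L)\text{ zero-error list code for }W\}\le 1-\frac1B,$$ where $$B=\binom{M}{L+1}^{-1}2^{LI_{L+1}(G,P)}+1+\sum_{\ell=1}^L\binom{L+1}{\ell}^2\binom{M}{\ell}^{-1}2^{L\theta^{(\ell)}_{L+1}(G,P)}.$$
   Context: Notation: $[j]=\{1,\dots,j\}$, $[i:j]=\{i,\dots,j\}$; $\log$ base 2. A discrete channel has finite $\mathcal{X},\mathcal{Y}$ and pmfs $W(\cdot|x)$ on $\mathcal{Y}$. $G(W)=(\mathcal{X},\mathcal{E})$ is the hypergraph whose edges are all $e\subseteq\mathcal{X}$ with $\prod_{x\in e}W(y|x)=0$ for every $y\in\mathcal{Y}$. A map $f\colon[M]\to\mathcal{X}$ is an $(M,L)$ zero-error list code for $W$ if for every $(L+1)$-element subset $S\subseteq[M]$, $\{f(m):m\in S\}\in\mathcal{E}$. For $x_{[k]}\in\mathcal{X}^k$, $\sigma(x_{[k]})=\{x_1,\dots,x_k\}$, $P(x_S)=\prod_{j\in S}P(x_j)$. $I_{L+1}(G,P):=-\frac1L\log\sum_{x_{[L+1]}:\sigma(x_{[L+1]})\notin\mathcal{E}}P(x_{[L+1]})$ and for $\ell\in[L]$, $\theta^{(\ell)}_{L+1}(G,P):=2I_{L+1}(G,P)+\frac1L\log\sum_{x_{[\ell]}}P(x_{[\ell]})\Big[\sum_{x_{[\ell+1:L+1]}:\sigma(x_{[L+1]})\notin\mathcal{E}}P(x_{[\ell+1:L+1]})\Big]^2$.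 *)

theory Defs
  imports Complex_Main "HOL-Library.FuncSet"
begin

text \<open>A discrete channel: finite input type 'x, finite output type 'y,
  W x y = W(y|x), a pmf on 'y for every x.\<close>
definition discrete_channel :: "('x::finite \<Rightarrow> 'y::finite \<Rightarrow> real) \<Rightarrow> bool" where
  "discrete_channel W \<longleftrightarrow> (\<forall>x y. 0 \<le> W x y) \<and> (\<forall>x. (\<Sum>y\<in>UNIV. W x y) = 1)"

definition is_pmf :: "('x::finite \<Rightarrow> real) \<Rightarrow> bool" where
  "is_pmf P \<longleftrightarrow> (\<forall>x. 0 \<le> P x) \<and> (\<Sum>x\<in>UNIV. P x) = 1"

definition hyperedges :: "('x::finite \<Rightarrow> 'y::finite \<Rightarrow> real) \<Rightarrow> 'x set set" where
  "hyperedges W = {e. \<forall>y. (\<Prod>x\<in>e. W x y) = 0}"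

definition zero_error_list_code ::
  "('x::finite \<Rightarrow> 'y::finite \<Rightarrow> real) \<Rightarrow> nat \<Rightarrow> nat \<Rightarrow> (nat \<Rightarrow> 'x) \<Rightarrow> bool" where
  "zero_error_list_code W M L f \<longleftrightarrow>
     (\<forall>S. S \<subseteq> {1..M} \<and> card S = L + 1 \<longrightarrow> f ` S \<in> hyperedges W)"

definition nonedge_mass :: "'x set set \<Rightarrow> ('x::finite \<Rightarrow> real) \<Rightarrow> nat \<Rightarrow> real" where
  "nonedge_mass G P L =
     (\<Sum>x\<in>PiE {1..L+1} (\<lambda>_. UNIV).
        if x ` {1..L+1} \<notin> G then (\<Prod>j\<in>{1..L+1}. P (x j)) else 0)"

definition I_hyp :: "'x set set \<Rightarrow> ('x::finite \<Rightarrow> real) \<Rightarrow> nat \<Rightarrow> real" where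
  "I_hyp G P L = - (1 / real L) * log 2 (nonedge_mass G P L)"

definition theta_hyp :: "'x set set \<Rightarrow> ('x::finite \<Rightarrow> real) \<Rightarrow> nat \<Rightarrow> nat \<Rightarrow> real" where
  "theta_hyp G P L l = 2 * I_hyp G P L + (1 / real L) * log 2
     (\<Sum>xa\<in>PiE {1..l} (\<lambda>_. UNIV). (\<Prod>j\<in>{1..l}. P (xa j)) *
        (\<Sum>xb\<in>PiE {l+1..L+1} (\<lambda>_. UNIV).
           if xa ` {1..l} \<union> xb ` {l+1..L+1} \<notin> G
           then (\<Prod>j\<in>{l+1..L+1}. P (xb j)) else 0) ^ 2)"

definition code_prob ::
  "('x::finite \<Rightarrow> 'y::finite \<Rightarrow> real) \<Rightarrow> ('x \<Rightarrow> real) \<Rightarrow> nat \<Rightarrow> nat \<Rightarrow> real" where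
  "code_prob W P M L =
     (\<Sum>f\<in>PiE {1..M} (\<lambda>_. UNIV).
        if zero_error_list_code W M L f then (\<Prod>m\<in>{1..M}. P (f m)) else 0)"

end

theory Submission
  imports Defs "HOL-Analysis.Analysis"
begin

text \<open>Let \<open>X f\<close> count the \<open>(L+1)\<close>-subsets \<open>S\<close> of \<open>[M]\<close> whose image \<open>f ` S\<close> is not a
  hyperedge; \<open>F\<close> is a zero-error list code iff \<open>X F = 0\<close>. By Cauchy--Schwarz (the second moment
  method), \<open>Pr{X \<noteq> 0} \<ge> E[X]\<^sup>2 / E[X\<^sup>2]\<close>, and \<open>E[X] = binom M (L+1) * p\<close> with \<open>p = 2^(-L I)\<close>.
  In \<open>E[X\<^sup>2]\<close>, the non-edge events of two sets \<open>S, T\<close> with \<open>|S \<inter> T| = l\<close> are independent given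
  the values on \<open>S \<inter> T\<close>, so the pair contributes exactly the quantity whose logarithm
  defines \<open>\<theta>\<close> for overlap \<open>l\<close>; counting the pairs of each overlap yields
  \<open>E[X\<^sup>2] \<le> B E[X]\<^sup>2\<close>.\<close>

definition iid_expectation :: "('x \<Rightarrow> real) \<Rightarrow> 'i set \<Rightarrow> (('i \<Rightarrow> 'x) \<Rightarrow> real) \<Rightarrow> real" where
  "iid_expectation P D g = (\<Sum>h\<in>PiE D (\<lambda>_. UNIV). (\<Prod>d\<in>D. P (h d)) * g h)"

lemma iid_expectation_const:
  fixes P :: "'x::finite \<Rightarrow> real"
  assumes "is_pmf P" "finite D"
  shows "iid_expectation P D (\<lambda>_. c) = c"
proof -
  have "(\<Sum>h\<in>PiE D (\<lambda>_. UNIV). \<Prod>d\<in>D. P (h d)) = (\<Prod>d\<in>D. \<Sum>x\<in>UNIV. P x)"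
    using prod_sum_PiE[of D "\<lambda>_. UNIV" "\<lambda>_ x. P x"] assms(2) by simp
  also have "\<dots> = 1" using assms(1) by (simp add: is_pmf_def)
  finally show ?thesis unfolding iid_expectation_def by (simp add: sum_distrib_right[symmetric])
qed

lemma iid_expectation_cmult: "iid_expectation P D (\<lambda>h. c * g h) = c * iid_expectation P D g"
  unfolding iid_expectation_def by (simp add: sum_distrib_left algebra_simps)

lemma iid_expectation_diff:
  "iid_expectation P D (\<lambda>h. f h - g h) = iid_expectation P D f - iid_expectation P D g"
  unfolding iid_expectation_def by (simp add: sum_subtractf algebra_simps)

lemma iid_expectation_sum:
  "iid_expectation P D (\<lambda>h. \<Sum>s\<in>K. g s h) = (\<Sum>s\<in>K. iid_expectation P D (g s))"
  unfolding iid_expectation_def by (simp add: sum_distrib_left sum.swap[of _ K])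

lemma iid_expectation_cong:
  "(\<And>h. h \<in> PiE D (\<lambda>_. UNIV) \<Longrightarrow> f h = g h) \<Longrightarrow> iid_expectation P D f = iid_expectation P D g"
  unfolding iid_expectation_def by (intro sum.cong) auto

lemma iid_expectation_nonneg:
  "(\<And>x. 0 \<le> P x) \<Longrightarrow> (\<And>h. 0 \<le> g h) \<Longrightarrow> 0 \<le> iid_expectation P D g"
  unfolding iid_expectation_def by (intro sum_nonneg mult_nonneg_nonneg prod_nonneg) auto

lemma bij_betw_override_on_PiE:
  assumes "A \<inter> B = {}"
  shows "bij_betw (\<lambda>(a, b). override_on b a A) (PiE A (\<lambda>_. U) \<times> PiE B (\<lambda>_. U)) (PiE (A \<union> B) (\<lambda>_. U))"
proof (rule bij_betw_byWitness[where f' = "\<lambda>h. (restrict h A, restrict h B)"])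
  show "\<forall>x\<in>PiE A (\<lambda>_. U) \<times> PiE B (\<lambda>_. U). (\<lambda>h. (restrict h A, restrict h B)) ((\<lambda>(a, b). override_on b a A) x) = x"
    using assms by (fastforce simp: override_on_def PiE_iff extensional_def)
  show "\<forall>h\<in>PiE (A \<union> B) (\<lambda>_. U). (\<lambda>(a, b). override_on b a A) (restrict h A, restrict h B) = h"
    by (fastforce simp: override_on_def PiE_iff extensional_def)
qed (auto simp: override_on_def PiE_iff extensional_def)

lemma iid_expectation_split:
  assumes "finite A" "finite B" "A \<inter> B = {}"
  shows "iid_expectation P (A \<union> B) g
    = iid_expectation P A (\<lambda>a. iid_expectation P B (\<lambda>b. g (override_on b a A)))"
proof -
  have weight: "(\<Prod>d\<in>A \<union> B. P (override_on b a A d)) = (\<Prod>d\<in>A. P (a d)) * (\<Prod>d\<in>B. P (b d))" for a b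
  proof -
    have "(\<Prod>d\<in>B. P (override_on b a A d)) = (\<Prod>d\<in>B. P (b d))"
      using assms(3) by (intro prod.cong) (auto simp: override_on_def)
    then show ?thesis
      using assms by (simp add: prod.union_disjoint)
  qed
  have "iid_expectation P (A \<union> B) g = (\<Sum>(a, b)\<in>PiE A (\<lambda>_. UNIV) \<times> PiE B (\<lambda>_. UNIV).
      (\<Prod>d\<in>A \<union> B. P (override_on b a A d)) * g (override_on b a A))"
    unfolding iid_expectation_def
    by (subst sum.reindex_bij_betw[OF bij_betw_override_on_PiE[OF assms(3)], symmetric])
       (simp add: case_prod_beta)
  also have "\<dots> = iid_expectation P A (\<lambda>a. iid_expectation P B (\<lambda>b. g (override_on b a A)))"
    unfolding iid_expectation_def weight sum.cartesian_product[symmetric]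
    by (simp add: sum_distrib_left algebra_simps)
  finally show ?thesis .
qed

lemma iid_expectation_local:
  fixes P :: "'x::finite \<Rightarrow> real"
  assumes "is_pmf P" "finite D'" "D \<subseteq> D'"
    and "\<And>h h'. (\<And>i. i \<in> D \<Longrightarrow> h i = h' i) \<Longrightarrow> g h = g h'"
  shows "iid_expectation P D' g = iid_expectation P D g"
proof -
  have "D' = D \<union> (D' - D)" using assms(3) by blast
  then have "iid_expectation P D' g
      = iid_expectation P D (\<lambda>a. iid_expectation P (D' - D) (\<lambda>b. g (override_on b a D)))"
    using assms(2,3) iid_expectation_split[of D "D' - D" P g] by (metis Diff_disjoint finite_Diff finite_subset)
  also have "\<dots> = iid_expectation P D (\<lambda>a. iid_expectation P (D' - D) (\<lambda>_. g a))"
    by (intro iid_expectation_cong arg_cong[where f = "iid_expectation P (D' - D)"] ext assms(4)) simp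
  finally show ?thesis
    using iid_expectation_const[OF assms(1), of "D' - D"] assms(2) by simp
qed

lemma iid_expectation_relabel:
  fixes P :: "'x \<Rightarrow> real" and D1 :: "'i set" and D2 :: "'j set"
  assumes "finite D1" "finite D2" "card D1 = card D2"
  shows "iid_expectation P D2 (\<lambda>h. F (h ` D2)) = iid_expectation P D1 (\<lambda>h. F (h ` D1))"
proof -
  obtain \<pi> where \<pi>: "bij_betw \<pi> D1 D2" using finite_same_card_bij[OF assms] by blast
  define \<psi> where "\<psi> y = restrict (y \<circ> \<pi>) D1" for y :: "'j \<Rightarrow> 'x"
  have "bij_betw \<psi> (PiE D2 (\<lambda>_. UNIV)) (PiE D1 (\<lambda>_. UNIV))"
  proof (rule bij_betw_byWitness[where f' = "\<lambda>x. restrict (x \<circ> inv_into D1 \<pi>) D2"])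
    show "\<forall>y\<in>PiE D2 (\<lambda>_. UNIV). restrict (\<psi> y \<circ> inv_into D1 \<pi>) D2 = y"
      using \<pi> by (force simp: \<psi>_def PiE_iff extensional_def bij_betw_def inv_into_into f_inv_into_f)
    show "\<forall>x\<in>PiE D1 (\<lambda>_. UNIV). \<psi> (restrict (x \<circ> inv_into D1 \<pi>) D2) = x"
      using \<pi> by (force simp: \<psi>_def PiE_iff extensional_def bij_betw_def)
  qed (auto simp: \<psi>_def)
  then have "iid_expectation P D1 (\<lambda>h. F (h ` D1))
      = (\<Sum>y\<in>PiE D2 (\<lambda>_. UNIV). (\<Prod>d\<in>D1. P (\<psi> y d)) * F (\<psi> y ` D1))"
    unfolding iid_expectation_def by (rule sum.reindex_bij_betw[symmetric])
  moreover have "(\<Prod>d\<in>D1. P (\<psi> y d)) = (\<Prod>d\<in>D2. P (y d))" for y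
    using prod.reindex_bij_betw[OF \<pi>, of "\<lambda>d. P (y d)"] by (simp add: \<psi>_def)
  moreover have "\<psi> y ` D1 = y ` D2" for y
    using \<pi> by (auto simp: \<psi>_def bij_betw_def)
  ultimately show ?thesis
    unfolding iid_expectation_def by simp
qed

lemma iid_expectation_independent:
  assumes "finite A" "finite B" "A \<inter> B = {}"
  shows "iid_expectation P (A \<union> B) (\<lambda>h. u (h ` A) * v (h ` B))
    = iid_expectation P A (\<lambda>h. u (h ` A)) * iid_expectation P B (\<lambda>h. v (h ` B))"
proof -
  have image_A: "override_on b a A ` A = a ` A" and image_B: "override_on b a A ` B = b ` B" for a b
    using assms(3) by (auto simp: override_on_def image_def)
  have "iid_expectation P (A \<union> B) (\<lambda>h. u (h ` A) * v (h ` B))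
      = iid_expectation P A (\<lambda>a. u (a ` A) * iid_expectation P B (\<lambda>b. v (b ` B)))"
    using assms by (simp add: iid_expectation_split iid_expectation_cmult image_A image_B)
  also have "\<dots> = iid_expectation P A (\<lambda>h. u (h ` A)) * iid_expectation P B (\<lambda>h. v (h ` B))"
    using iid_expectation_cmult[of P A "iid_expectation P B (\<lambda>h. v (h ` B))" "\<lambda>h. u (h ` A)"]
    by (simp add: mult.commute)
  finally show ?thesis .
qed

lemma iid_expectation_Cauchy_Schwarz:
  assumes "\<And>x. 0 \<le> P x"
  shows "(iid_expectation P D (\<lambda>h. a h * b h))\<^sup>2
    \<le> iid_expectation P D (\<lambda>h. (a h)\<^sup>2) * iid_expectation P D (\<lambda>h. (b h)\<^sup>2)"
proof -
  define w where "w h = sqrt (\<Prod>d\<in>D. P (h d))" for h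
  have "(\<Prod>d\<in>D. P (h d)) = (w h)\<^sup>2" for h
    using assms by (simp add: w_def prod_nonneg)
  then have "iid_expectation P D (\<lambda>h. a h * b h) = (\<Sum>h\<in>PiE D (\<lambda>_. UNIV). (w h * a h) * (w h * b h))"
    and "iid_expectation P D (\<lambda>h. (a h)\<^sup>2) = (\<Sum>h\<in>PiE D (\<lambda>_. UNIV). (w h * a h)\<^sup>2)"
    and "iid_expectation P D (\<lambda>h. (b h)\<^sup>2) = (\<Sum>h\<in>PiE D (\<lambda>_. UNIV). (w h * b h)\<^sup>2)"
    unfolding iid_expectation_def by (simp_all add: power2_eq_square algebra_simps)
  then show ?thesis by (simp only: Cauchy_Schwarz_ineq_sum)
qed

lemma iid_expectation_second_moment:
  assumes "\<And>x. 0 \<le> P x"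
  shows "(iid_expectation P D X)\<^sup>2
    \<le> iid_expectation P D (\<lambda>h. (X h)\<^sup>2) * iid_expectation P D (\<lambda>h. of_bool (X h \<noteq> 0))"
proof -
  have "(\<lambda>h. X h * of_bool (X h \<noteq> 0)) = X" "(\<lambda>h. (of_bool (X h \<noteq> 0))\<^sup>2) = (\<lambda>h. of_bool (X h \<noteq> 0) :: real)"
    by auto
  then show ?thesis
    using iid_expectation_Cauchy_Schwarz[where P = P and D = D and a = X and b = "\<lambda>h. of_bool (X h \<noteq> 0)"] assms
    by (simp only:)
qed

definition nonedge_completion_mass :: "'x set set \<Rightarrow> ('x \<Rightarrow> real) \<Rightarrow> nat \<Rightarrow> nat \<Rightarrow> 'x set \<Rightarrow> real" where
  "nonedge_completion_mass G P L l Z =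
     iid_expectation P {l+1..L+1} (\<lambda>h. of_bool (Z \<union> h ` {l+1..L+1} \<notin> G))"

definition overlap_mass :: "'x set set \<Rightarrow> ('x \<Rightarrow> real) \<Rightarrow> nat \<Rightarrow> nat \<Rightarrow> real" where
  "overlap_mass G P L l = iid_expectation P {1..l} (\<lambda>h. (nonedge_completion_mass G P L l (h ` {1..l}))\<^sup>2)"

lemma nonedge_mass_eq_iid_expectation:
  "nonedge_mass G P L = iid_expectation P {1..L+1} (\<lambda>h. of_bool (h ` {1..L+1} \<notin> G))"
  unfolding nonedge_mass_def iid_expectation_def by (intro sum.cong) auto

lemma theta_hyp_eq_overlap_mass:
  "theta_hyp G P L l = 2 * I_hyp G P L + 1 / real L * log 2 (overlap_mass G P L l)"
  unfolding theta_hyp_def overlap_mass_def nonedge_completion_mass_def iid_expectation_def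
  by (intro arg_cong2[where f = "(+)"] arg_cong2[where f = "(*)"] arg_cong2[where f = log]
      sum.cong arg_cong[where f = "\<lambda>x. x\<^sup>2"] refl) auto

lemma overlap_mass_nonneg: "(\<And>x. 0 \<le> P x) \<Longrightarrow> 0 \<le> overlap_mass G P L l"
  unfolding overlap_mass_def by (rule iid_expectation_nonneg) auto

lemma overlap_mass_0: "overlap_mass G P L 0 = (nonedge_mass G P L)\<^sup>2"
  unfolding overlap_mass_def nonedge_completion_mass_def nonedge_mass_eq_iid_expectation
  by (simp add: iid_expectation_def)

lemma overlap_mass_full: "overlap_mass G P L (L + 1) = nonedge_mass G P L"
  unfolding overlap_mass_def nonedge_completion_mass_def nonedge_mass_eq_iid_expectation
  by (auto simp: iid_expectation_def intro!: sum.cong)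

lemma iid_expectation_nonedge:
  fixes P :: "'x::finite \<Rightarrow> real"
  assumes "is_pmf P" "finite D" "S \<subseteq> D" "card S = L + 1"
  shows "iid_expectation P D (\<lambda>f. of_bool (f ` S \<notin> G)) = nonedge_mass G P L"
proof -
  have "iid_expectation P D (\<lambda>f. of_bool (f ` S \<notin> G)) = iid_expectation P S (\<lambda>f. of_bool (f ` S \<notin> G))"
    using assms(1-3) by (intro iid_expectation_local) (auto intro!: arg_cong[where f = of_bool] image_cong)
  also have "\<dots> = nonedge_mass G P L"
    unfolding nonedge_mass_eq_iid_expectation
    using assms(2-4) finite_subset by (intro iid_expectation_relabel) auto
  finally show ?thesis .
qed

text \<open>Given the values on \<open>S \<inter> T\<close>, the two events are independent, each with conditional
  probability \<open>nonedge_completion_mass\<close>.\<close>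
lemma iid_expectation_nonedge_pair:
  fixes P :: "'x::finite \<Rightarrow> real" and D :: "'i set"
  assumes "is_pmf P" "finite D" "S \<subseteq> D" "T \<subseteq> D" "card S = L + 1" "card T = L + 1"
    and "card (S \<inter> T) = l"
  shows "iid_expectation P D (\<lambda>f. of_bool (f ` S \<notin> G) * of_bool (f ` T \<notin> G)) = overlap_mass G P L l"
proof -
  define I S' T' where "I = S \<inter> T" and "S' = S - T" and "T' = T - S"
  have "finite S" "finite T"
    using assms(2-4) finite_subset by auto
  then have fin: "finite I" "finite S'" "finite T'"
    by (auto simp: I_def S'_def T'_def)
  have card_I: "card I = l" and card_S': "card S' = L + 1 - l" and card_T': "card T' = L + 1 - l"
    using assms(5-7) fin card_Diff_subset_Int[of S T] card_Diff_subset_Int[of T S]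
    by (auto simp: I_def S'_def T'_def Int_commute)
  have S_eq: "S = I \<union> S'" and T_eq: "T = I \<union> T'" and ST_eq: "S \<union> T = I \<union> (S' \<union> T')"
    and disjoint: "I \<inter> (S' \<union> T') = {}" "S' \<inter> T' = {}"
    by (auto simp: I_def S'_def T'_def)
  have image_S: "override_on h a I ` S = a ` I \<union> h ` S'" and image_T: "override_on h a I ` T = a ` I \<union> h ` T'"
    for a h :: "'i \<Rightarrow> 'x"
    unfolding S_eq T_eq by (auto simp: override_on_def image_def S'_def T'_def I_def)
  have "iid_expectation P D (\<lambda>f. of_bool (f ` S \<notin> G) * of_bool (f ` T \<notin> G))
      = iid_expectation P (I \<union> (S' \<union> T')) (\<lambda>f. of_bool (f ` S \<notin> G) * of_bool (f ` T \<notin> G))"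
    unfolding ST_eq[symmetric] using assms(1-4)
    by (intro iid_expectation_local) (auto intro!: arg_cong2[where f = "(*)"] arg_cong[where f = of_bool] image_cong)
  also have "\<dots> = iid_expectation P I (\<lambda>a. iid_expectation P (S' \<union> T')
      (\<lambda>h. of_bool (a ` I \<union> h ` S' \<notin> G) * of_bool (a ` I \<union> h ` T' \<notin> G)))"
    using fin disjoint by (simp add: iid_expectation_split image_S image_T)
  also have "\<dots> = iid_expectation P I (\<lambda>a. (nonedge_completion_mass G P L l (a ` I))\<^sup>2)"
  proof (rule iid_expectation_cong)
    fix a :: "'i \<Rightarrow> 'x"
    have "iid_expectation P S' (\<lambda>h. of_bool (a ` I \<union> h ` S' \<notin> G)) = nonedge_completion_mass G P L l (a ` I)"
      and "iid_expectation P T' (\<lambda>h. of_bool (a ` I \<union> h ` T' \<notin> G)) = nonedge_completion_mass G P L l (a ` I)"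
      unfolding nonedge_completion_mass_def using fin card_S' card_T'
      by (auto intro: iid_expectation_relabel)
    then show "iid_expectation P (S' \<union> T') (\<lambda>h. of_bool (a ` I \<union> h ` S' \<notin> G) * of_bool (a ` I \<union> h ` T' \<notin> G))
        = (nonedge_completion_mass G P L l (a ` I))\<^sup>2"
      using fin disjoint iid_expectation_independent[of S' T' P "\<lambda>Y. of_bool (a ` I \<union> Y \<notin> G)" "\<lambda>Y. of_bool (a ` I \<union> Y \<notin> G)"]
      by (simp add: power2_eq_square)
  qed
  also have "\<dots> = overlap_mass G P L l"
    unfolding overlap_mass_def using fin card_I by (intro iid_expectation_relabel) auto
  finally show ?thesis .
qed

lemma card_subsets_inter_card_le:
  assumes "finite A" "S \<subseteq> A" "card S = k"
  shows "card {T. (T \<subseteq> A \<and> card T = k) \<and> card (S \<inter> T) = l} \<le> (k choose l) * ((card A - k) choose (k - l))"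
proof -
  have "finite S" using assms(1,2) finite_subset by blast
  have "card {T. (T \<subseteq> A \<and> card T = k) \<and> card (S \<inter> T) = l}
      \<le> card ({U. U \<subseteq> S \<and> card U = l} \<times> {V. V \<subseteq> A - S \<and> card V = k - l})"
  proof (rule card_inj_on_le[where f = "\<lambda>T. (S \<inter> T, T - S)"])
    show "inj_on (\<lambda>T. (S \<inter> T, T - S)) {T. (T \<subseteq> A \<and> card T = k) \<and> card (S \<inter> T) = l}"
      by (rule inj_onI) (metis Diff_partition Int_lower1 Un_Diff_Int inf_commute prod.inject)
    show "(\<lambda>T. (S \<inter> T, T - S)) ` {T. (T \<subseteq> A \<and> card T = k) \<and> card (S \<inter> T) = l}
        \<subseteq> {U. U \<subseteq> S \<and> card U = l} \<times> {V. V \<subseteq> A - S \<and> card V = k - l}"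
    proof (rule image_subsetI)
      fix T assume T: "T \<in> {T. (T \<subseteq> A \<and> card T = k) \<and> card (S \<inter> T) = l}"
      then have "card (T - S) = k - l"
        using card_Diff_subset_Int[of T S] finite_subset[OF _ assms(1)] by (simp add: Int_commute)
      then show "(S \<inter> T, T - S) \<in> {U. U \<subseteq> S \<and> card U = l} \<times> {V. V \<subseteq> A - S \<and> card V = k - l}"
        using T by auto
    qed
  qed (use \<open>finite S\<close> assms(1) in auto)
  also have "\<dots> = (k choose l) * ((card A - k) choose (k - l))"
    using \<open>finite S\<close> assms by (simp add: card_cartesian_product n_subsets card_Diff_subset)
  finally show ?thesis .
qed

lemma choose_overlap_le:
  assumes "l \<le> k" "k \<le> n"
  shows "real ((k choose l) * ((n - k) choose (k - l))) \<le> real (n choose k) * (real (k choose l))\<^sup>2 / real (n choose l)"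
proof -
  have "(k choose l) * ((n - k) choose (k - l)) * (n choose l) \<le> (k choose l) * ((n - l) choose (k - l)) * (n choose l)"
    using assms by (intro mult_right_mono mult_left_mono binomial_right_mono) auto
  also have "\<dots> = (n choose k) * (k choose l)\<^sup>2"
    using choose_mult[OF assms] by (simp add: power2_eq_square algebra_simps)
  finally have "real ((k choose l) * ((n - k) choose (k - l))) * real (n choose l) \<le> real (n choose k) * (real (k choose l))\<^sup>2"
    by (metis of_nat_le_iff of_nat_mult of_nat_power)
  moreover have "0 < real (n choose l)" using assms by simp
  ultimately show ?thesis by (simp add: field_simps)
qed

lemma sum_iid_expectation_nonedge_pairs_le:
  fixes P :: "'x::finite \<Rightarrow> real" and D :: "'i set"
  assumes "is_pmf P" "finite D" "S \<subseteq> D" "card S = L + 1" "L + 1 \<le> card D"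
  shows "(\<Sum>T | T \<subseteq> D \<and> card T = L + 1. iid_expectation P D (\<lambda>f. of_bool (f ` S \<notin> G) * of_bool (f ` T \<notin> G)))
    \<le> (\<Sum>l = 0..L + 1. real (card D choose (L + 1)) * (real ((L + 1) choose l))\<^sup>2 / real (card D choose l)
          * overlap_mass G P L l)"
proof -
  let ?K = "{T. T \<subseteq> D \<and> card T = L + 1}"
  let ?K\<^sub>l = "\<lambda>l. {T \<in> ?K. card (S \<inter> T) = l}"
  have "finite S" "finite ?K"
    using assms(2,3) finite_subset by auto
  have "(\<Sum>T\<in>?K. iid_expectation P D (\<lambda>f. of_bool (f ` S \<notin> G) * of_bool (f ` T \<notin> G)))
      = (\<Sum>l = 0..L + 1. \<Sum>T\<in>?K\<^sub>l l. iid_expectation P D (\<lambda>f. of_bool (f ` S \<notin> G) * of_bool (f ` T \<notin> G)))"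
    using \<open>finite ?K\<close> \<open>finite S\<close> assms(4) card_mono[of S "S \<inter> _"]
    by (intro sum.group[symmetric]) auto
  also have "\<dots> = (\<Sum>l = 0..L + 1. real (card (?K\<^sub>l l)) * overlap_mass G P L l)"
    using assms(1-4) by (intro sum.cong refl) (simp add: iid_expectation_nonedge_pair)
  also have "\<dots> \<le> (\<Sum>l = 0..L + 1. real (card D choose (L + 1)) * (real ((L + 1) choose l))\<^sup>2 / real (card D choose l)
      * overlap_mass G P L l)"
  proof (intro sum_mono mult_right_mono overlap_mass_nonneg)
    fix l assume "l \<in> {0..L + 1}"
    then have "real (card (?K\<^sub>l l)) \<le> real (((L + 1) choose l) * ((card D - (L + 1)) choose (L + 1 - l)))"
      using card_subsets_inter_card_le[OF assms(2-4), of l] by (subst of_nat_le_iff) (simp add: conj_assoc)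
    also have "\<dots> \<le> real (card D choose (L + 1)) * (real ((L + 1) choose l))\<^sup>2 / real (card D choose l)"
      using \<open>l \<in> {0..L + 1}\<close> assms(5) by (intro choose_overlap_le) auto
    finally show "real (card (?K\<^sub>l l)) \<le> \<dots>" .
  qed (use assms(1) in \<open>simp add: is_pmf_def\<close>)
  finally show ?thesis .
qed

definition nonedge_count :: "'x set set \<Rightarrow> 'i set \<Rightarrow> nat \<Rightarrow> ('i \<Rightarrow> 'x) \<Rightarrow> real" where
  "nonedge_count G D k f = (\<Sum>S | S \<subseteq> D \<and> card S = k. of_bool (f ` S \<notin> G))"

lemma code_prob_eq_nonedge_count:
  assumes "is_pmf P"
  shows "code_prob W P M L
    = 1 - iid_expectation P {1..M} (\<lambda>f. of_bool (nonedge_count (hyperedges W) {1..M} (L + 1) f \<noteq> 0))"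
proof -
  have "finite {S. S \<subseteq> {1..M} \<and> card S = L + 1}"
    by (rule finite_subset[of _ "Pow {1..M}"]) auto
  then have "zero_error_list_code W M L f \<longleftrightarrow> nonedge_count (hyperedges W) {1..M} (L + 1) f = 0" for f
    unfolding zero_error_list_code_def nonedge_count_def by (subst sum_nonneg_eq_0_iff) auto
  then have "code_prob W P M L
      = iid_expectation P {1..M} (\<lambda>f. 1 - of_bool (nonedge_count (hyperedges W) {1..M} (L + 1) f \<noteq> 0))"
    unfolding code_prob_def iid_expectation_def by (intro sum.cong) auto
  then show ?thesis
    by (simp add: iid_expectation_diff iid_expectation_const[OF assms])
qed

lemma iid_expectation_nonedge_count:
  fixes P :: "'x::finite \<Rightarrow> real" and D :: "'i set"
  assumes "is_pmf P" "finite D"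
  shows "iid_expectation P D (nonedge_count G D (L + 1)) = real (card D choose (L + 1)) * nonedge_mass G P L"
proof -
  have "iid_expectation P D (nonedge_count G D (L + 1))
      = (\<Sum>S | S \<subseteq> D \<and> card S = L + 1. iid_expectation P D (\<lambda>f. of_bool (f ` S \<notin> G)))"
    unfolding nonedge_count_def by (rule iid_expectation_sum)
  also have "\<dots> = (\<Sum>S | S \<subseteq> D \<and> card S = L + 1. nonedge_mass G P L)"
    using assms by (intro sum.cong) (auto intro: iid_expectation_nonedge)
  finally show ?thesis
    using n_subsets[OF assms(2)] by simp
qed

lemma iid_expectation_nonedge_count_square_le:
  fixes P :: "'x::finite \<Rightarrow> real" and D :: "'i set"
  assumes "is_pmf P" "finite D" "L + 1 \<le> card D"
  shows "iid_expectation P D (\<lambda>f. (nonedge_count G D (L + 1) f)\<^sup>2)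
    \<le> real (card D choose (L + 1)) * (\<Sum>l = 0..L + 1. real (card D choose (L + 1))
          * (real ((L + 1) choose l))\<^sup>2 / real (card D choose l) * overlap_mass G P L l)"
proof -
  let ?K = "{S. S \<subseteq> D \<and> card S = L + 1}"
  have "(nonedge_count G D (L + 1) f)\<^sup>2 = (\<Sum>S\<in>?K. \<Sum>T\<in>?K. of_bool (f ` S \<notin> G) * of_bool (f ` T \<notin> G))" for f
    unfolding nonedge_count_def power2_eq_square by (simp add: sum_product)
  then have "iid_expectation P D (\<lambda>f. (nonedge_count G D (L + 1) f)\<^sup>2)
      = (\<Sum>S\<in>?K. \<Sum>T\<in>?K. iid_expectation P D (\<lambda>f. of_bool (f ` S \<notin> G) * of_bool (f ` T \<notin> G)))"
    by (simp add: iid_expectation_sum)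
  also have "\<dots> \<le> (\<Sum>S\<in>?K. \<Sum>l = 0..L + 1. real (card D choose (L + 1))
      * (real ((L + 1) choose l))\<^sup>2 / real (card D choose l) * overlap_mass G P L l)"
    using assms by (intro sum_mono sum_iid_expectation_nonedge_pairs_le) auto
  finally show ?thesis
    using n_subsets[OF assms(2)] by simp
qed

lemma powr_I_hyp:
  assumes "L \<noteq> 0" "0 < nonedge_mass G P L"
  shows "2 powr (real L * I_hyp G P L) = 1 / nonedge_mass G P L"
  unfolding I_hyp_def using assms by (simp add: powr_minus_divide)

text \<open>Only an inequality because \<open>log 2 0 = 0\<close> in Isabelle; it is an equality whenever
  \<open>overlap_mass G P L l > 0\<close>.\<close>
lemma overlap_mass_le_powr_theta_hyp:
  assumes "\<And>x. 0 \<le> P x" "L \<noteq> 0" "0 < nonedge_mass G P L"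
  shows "overlap_mass G P L l \<le> (nonedge_mass G P L)\<^sup>2 * 2 powr (real L * theta_hyp G P L l)"
proof -
  let ?p = "nonedge_mass G P L" and ?T = "overlap_mass G P L l"
  have "2 powr (real L * theta_hyp G P L l) = (2 powr (real L * I_hyp G P L))\<^sup>2 * 2 powr (log 2 ?T)"
    unfolding theta_hyp_eq_overlap_mass using assms(2)
    by (simp add: algebra_simps powr_add powr_realpow[symmetric] powr_powr)
  also have "\<dots> = 2 powr (log 2 ?T) / ?p\<^sup>2"
    using assms(2,3) by (simp add: powr_I_hyp power_divide)
  moreover have "0 \<le> ?T"
    using assms(1) by (rule overlap_mass_nonneg)
  ultimately show ?thesis
    using assms(3) by (cases "?T = 0") (auto simp: field_simps)
qed

lemma iid_expectation_nonedge_count_square_le_powr: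
  fixes P :: "'x::finite \<Rightarrow> real"
  assumes "is_pmf P" "L \<noteq> 0" "L + 1 \<le> M" "0 < nonedge_mass G P L"
  shows "iid_expectation P {1..M} (\<lambda>f. (nonedge_count G {1..M} (L + 1) f)\<^sup>2)
    \<le> (iid_expectation P {1..M} (nonedge_count G {1..M} (L + 1)))\<^sup>2
      * (1 / real (M choose (L + 1)) * 2 powr (real L * I_hyp G P L) + 1
         + (\<Sum>l = 1..L. real ((L + 1) choose l) ^ 2 / real (M choose l) * 2 powr (real L * theta_hyp G P L l)))"
proof -
  define N p where "N = real (M choose (L + 1))" and "p = nonedge_mass G P L"
  define c where "c l = real ((L + 1) choose l) ^ 2 / real (M choose l)" for l
  let ?T = "overlap_mass G P L"
  have "0 < N" using assms(3) by (simp add: N_def)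
  have P_nonneg: "\<And>x. 0 \<le> P x" using assms(1) by (simp add: is_pmf_def)
  have "iid_expectation P {1..M} (\<lambda>f. (nonedge_count G {1..M} (L + 1) f)\<^sup>2)
      \<le> N * (\<Sum>l = 0..L + 1. N * c l * ?T l)"
    using iid_expectation_nonedge_count_square_le[OF assms(1), of "{1..M}" L G] assms(3)
    by (simp add: N_def c_def)
  also have "(\<Sum>l = 0..L + 1. N * c l * ?T l) = N * c 0 * ?T 0 + (\<Sum>l = 1..L. N * c l * ?T l) + N * c (L + 1) * ?T (L + 1)"
    unfolding Suc_eq_plus1[symmetric] sum.atLeast0_atMost_Suc sum.atLeast_Suc_atMost[OF le0] by simp
  also have "\<dots> = N * p\<^sup>2 + (\<Sum>l = 1..L. N * c l * ?T l) + p"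
    using \<open>0 < N\<close> by (simp only: overlap_mass_0 overlap_mass_full) (simp add: N_def c_def p_def)
  also have "\<dots> \<le> N * p\<^sup>2 + (\<Sum>l = 1..L. N * c l * (p\<^sup>2 * 2 powr (real L * theta_hyp G P L l))) + p"
    unfolding p_def using P_nonneg assms(2,4) \<open>0 < N\<close>
    by (intro add_mono order_refl sum_mono mult_left_mono overlap_mass_le_powr_theta_hyp) (auto simp: c_def)
  also have "N * \<dots> = (N * p)\<^sup>2 * (1 / N * 2 powr (real L * I_hyp G P L) + 1
      + (\<Sum>l = 1..L. c l * 2 powr (real L * theta_hyp G P L l)))"
    using \<open>0 < N\<close> assms(2,4) unfolding p_def
    by (simp add: powr_I_hyp field_simps power2_eq_square sum_distrib_left sum_distrib_right)
  finally show ?thesis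
    using iid_expectation_nonedge_count[OF assms(1), of "{1..M}" G L] \<open>0 < N\<close>
    by (simp add: N_def p_def c_def mult_left_mono)
qed

theorem mainTheorem11:
  fixes W :: "'x::finite \<Rightarrow> 'y::finite \<Rightarrow> real" and P :: "'x \<Rightarrow> real" and L M :: nat
  assumes "discrete_channel W" and "is_pmf P" and "1 \<le> L" and "L + 1 \<le> M"
  shows "code_prob W P M L \<le>
    (if nonedge_mass (hyperedges W) P L = 0 then 1
     else 1 - 1 / (1 / real (M choose (L + 1)) * 2 powr (real L * I_hyp (hyperedges W) P L)
                   + 1
                   + (\<Sum>l = 1..L. real ((L + 1) choose l) ^ 2 / real (M choose l)
                        * 2 powr (real L * theta_hyp (hyperedges W) P L l))))"
proof -
  define G X where "G = hyperedges W" and "X = nonedge_count G {1..M} (L + 1)"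
  define q where "q = iid_expectation P {1..M} (\<lambda>f. of_bool (X f \<noteq> 0))"
  define B where "B = 1 / real (M choose (L + 1)) * 2 powr (real L * I_hyp G P L) + 1
    + (\<Sum>l = 1..L. real ((L + 1) choose l) ^ 2 / real (M choose l) * 2 powr (real L * theta_hyp G P L l))"
  have P_nonneg: "\<And>x. 0 \<le> P x" using assms(2) by (simp add: is_pmf_def)
  have code_prob: "code_prob W P M L = 1 - q"
    unfolding q_def X_def G_def using assms(2) by (rule code_prob_eq_nonedge_count)
  have "0 \<le> nonedge_mass G P L"
    unfolding nonedge_mass_eq_iid_expectation using P_nonneg by (rule iid_expectation_nonneg) simp
  moreover have "1 / B \<le> q" if "0 < nonedge_mass G P L"
  proof -
    let ?EX = "iid_expectation P {1..M} X"
    have "0 < ?EX"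
      using iid_expectation_nonedge_count[OF assms(2), of "{1..M}" G L] assms(4) that by (simp add: X_def)
    have "0 \<le> (\<Sum>l = 1..L. real ((L + 1) choose l) ^ 2 / real (M choose l) * 2 powr (real L * theta_hyp G P L l))"
      by (intro sum_nonneg) simp
    then have "1 \<le> B"
      unfolding B_def by (simp add: add_increasing)
    have "?EX\<^sup>2 \<le> iid_expectation P {1..M} (\<lambda>f. (X f)\<^sup>2) * q"
      unfolding q_def using P_nonneg by (rule iid_expectation_second_moment)
    also have "\<dots> \<le> ?EX\<^sup>2 * B * q"
      unfolding X_def B_def using assms(2-4) that
      by (intro mult_right_mono iid_expectation_nonedge_count_square_le_powr) (auto simp: q_def P_nonneg iid_expectation_nonneg)
    finally show ?thesis
      using \<open>0 < ?EX\<close> \<open>1 \<le> B\<close> by (simp add: field_simps)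
  qed
  moreover have "0 \<le> q"
    unfolding q_def using P_nonneg by (rule iid_expectation_nonneg) simp
  ultimately show ?thesis
    using code_prob by (auto simp: G_def B_def)
qed

end
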